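(* Let $\mathcal{X}$ be a finite set, $\pi$ a probability distribution on $\mathcal{X}$ with $\pi(x)>0$ for all $x$, and $\mathcal{N}\colon\mathcal{X}\to 2^{\mathcal{X}}$ a symmetric neighborhood mapping (with $x\notin\mathcal{N}(x)$, and $y\in\mathcal{N}(x)\iff x\in\mathcal{N}(y)$) such that every stochastic matrix $K$ on $\mathcal{X}$ with $K(x,y)>0$ if and only if $y\in\mathcal{N}(x)$ is irreducible. For a function $h\colon(0,\infty)\to(0,\infty)$ define $$K_h(x,y)=\frac{\mathbf{1}_{\mathcal{N}(x)}(y)}{Z_h(x)}\,h\!\left(\frac{\pi(y)}{\pi(x)}\right),\qquad Z_h(x)=\sum_{y\in\mathcal{N}(x)}h\!\left(\frac{\pi(y)}{\pi(x)}\right),$$ and let $\pi_h$ be the stationary distribution of $K_h$. If $h(u)=u^a$ for some $a\ge 0$, then $\pi_h(x)\propto\pi(x)^{2a}Z_h(x)$. If $h$ is a balancing function, i.e. $h(u)=u\,h(1/u)$ for all $u>0$, then $\pi_h(x)\propto\pi(x)Z_h(x)$. Moreover, in both cases $K_h$ is reversible (with respect to $\pi_h$).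
   Context: $\mathbf{1}_{A}$ denotes the indicator function of a set $A$; $\propto$ means equality up to a positive normalizing constant independent of $x$. *)

theory Defs
  imports Complex_Main
begin

definition stochastic_matrix :: "('a::finite \<Rightarrow> 'a \<Rightarrow> real) \<Rightarrow> bool" where
  "stochastic_matrix K \<longleftrightarrow> (\<forall>x y. K x y \<ge> 0) \<and> (\<forall>x. (\<Sum>y\<in>UNIV. K x y) = 1)"

fun matpow :: "('a::finite \<Rightarrow> 'a \<Rightarrow> real) \<Rightarrow> nat \<Rightarrow> 'a \<Rightarrow> 'a \<Rightarrow> real" where
  "matpow K 0 x y = (if x = y then 1 else 0)"
| "matpow K (Suc n) x y = (\<Sum>z\<in>UNIV. matpow K n x z * K z y)"

definition irreducible_matrix :: "('a::finite \<Rightarrow> 'a \<Rightarrow> real) \<Rightarrow> bool" where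
  "irreducible_matrix K \<longleftrightarrow> (\<forall>x y. \<exists>n. matpow K n x y > 0)"

definition Z_h :: "(real \<Rightarrow> real) \<Rightarrow> ('a::finite \<Rightarrow> real) \<Rightarrow> ('a \<Rightarrow> 'a set) \<Rightarrow> 'a \<Rightarrow> real" where
  "Z_h h \<pi> N x = (\<Sum>y\<in>N x. h (\<pi> y / \<pi> x))"

definition K_h :: "(real \<Rightarrow> real) \<Rightarrow> ('a::finite \<Rightarrow> real) \<Rightarrow> ('a \<Rightarrow> 'a set) \<Rightarrow> 'a \<Rightarrow> 'a \<Rightarrow> real" where
  "K_h h \<pi> N x y = (if y \<in> N x then 1 else 0) / Z_h h \<pi> N x * h (\<pi> y / \<pi> x)"

definition stationary_distribution :: "('a::finite \<Rightarrow> 'a \<Rightarrow> real) \<Rightarrow> ('a \<Rightarrow> real) \<Rightarrow> bool" where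
  "stationary_distribution K p \<longleftrightarrow> (\<forall>x. p x \<ge> 0) \<and> (\<Sum>x\<in>UNIV. p x) = 1
     \<and> (\<forall>y. (\<Sum>x\<in>UNIV. p x * K x y) = p y)"

definition reversible :: "('a::finite \<Rightarrow> 'a \<Rightarrow> real) \<Rightarrow> ('a \<Rightarrow> real) \<Rightarrow> bool" where
  "reversible K p \<longleftrightarrow> (\<forall>x y. p x * K x y = p y * K y x)"

end

theory Submission
  imports Defs
begin

text \<open>
  Both claims follow from detailed balance. Since \<open>Z\<^sub>h(x) K\<^sub>h(x,y) = h(\<pi>(y)/\<pi>(x))\<close> for
  \<open>y \<in> N(x)\<close>, a weight of the form \<open>w(x) Z\<^sub>h(x)\<close> is reversible for \<open>K\<^sub>h\<close> as soon as
  \<open>w(x) h(\<pi>(y)/\<pi>(x))\<close> is symmetric in \<open>x\<close> and \<open>y\<close>; this holds for \<open>w = \<pi>\<^sup>2\<^sup>a\<close> when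
  \<open>h(u) = u\<^sup>a\<close> (it equals \<open>(\<pi>(x) \<pi>(y))\<^sup>a\<close>) and for \<open>w = \<pi>\<close> when \<open>h\<close> is balancing.
  A reversible weight is stationary, and for an irreducible kernel the stationary
  distribution is unique: the ratio of any stationary distribution to a reversible weight
  is harmonic, hence constant by the maximum principle.
\<close>

lemma matpow_nonneg:
  assumes "\<forall>x y. K x y \<ge> 0"
  shows "matpow K n x y \<ge> 0"
  using assms by (induction n arbitrary: y) (auto intro!: sum_nonneg)

lemma harmonic_max_propagates:
  fixes K :: "'a::finite \<Rightarrow> 'a \<Rightarrow> real"
  assumes K: "stochastic_matrix K"
    and harmonic: "(\<Sum>y\<in>UNIV. K z y * f y) = f z"
    and le_max: "\<forall>y. f y \<le> f z"
    and step: "K z x > 0"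
  shows "f x = f z"
proof -
  have "(\<Sum>y\<in>UNIV. K z y * (f z - f y)) = f z * (\<Sum>y\<in>UNIV. K z y) - (\<Sum>y\<in>UNIV. K z y * f y)"
    by (simp add: algebra_simps sum_subtractf sum_distrib_left)
  also have "\<dots> = 0"
    using K harmonic by (simp add: stochastic_matrix_def)
  finally have "(\<Sum>y\<in>UNIV. K z y * (f z - f y)) = 0" .
  moreover have "\<forall>y\<in>UNIV. K z y * (f z - f y) \<ge> 0"
    using K le_max by (simp add: stochastic_matrix_def)
  ultimately have "K z x * (f z - f x) = 0"
    by (simp add: sum_nonneg_eq_0_iff)
  with step show ?thesis by simp
qed

lemma irreducible_harmonic_const:
  fixes K :: "'a::finite \<Rightarrow> 'a \<Rightarrow> real"
  assumes K: "stochastic_matrix K"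
    and irr: "irreducible_matrix K"
    and harmonic: "\<forall>z. (\<Sum>y\<in>UNIV. K z y * f y) = f z"
  shows "f x = f x'"
proof -
  obtain z0 where "f z0 = Max (range f)"
    by (metis Max_in finite_UNIV finite_imageI imageE UNIV_not_empty image_is_empty)
  then have z0_max: "\<forall>y. f y \<le> f z0"
    by simp
  have "f y = f z0" if "matpow K n z0 y > 0" for n y
    using that
  proof (induction n arbitrary: y)
    case 0
    then show ?case by (simp split: if_splits)
  next
    case (Suc n)
    then have "(\<Sum>z\<in>UNIV. matpow K n z0 z * K z y) \<noteq> 0"
      by simp
    then obtain z where "matpow K n z0 z * K z y \<noteq> 0"
      using sum.not_neutral_contains_not_neutral by blast
    moreover have "matpow K n z0 z \<ge> 0" "K z y \<ge> 0"
      using K matpow_nonneg by (auto simp: stochastic_matrix_def)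
    ultimately have "matpow K n z0 z > 0" "K z y > 0"
      by (auto simp: less_le)
    with Suc.IH have "f z = f z0"
      by blast
    moreover have "f y = f z"
      using harmonic_max_propagates[OF K harmonic[rule_format] _ \<open>K z y > 0\<close>] z0_max
        \<open>f z = f z0\<close> by simp
    ultimately show ?case
      by simp
  qed
  with irr show ?thesis
    unfolding irreducible_matrix_def by metis
qed

lemma reversible_imp_stationary:
  fixes K :: "'a::finite \<Rightarrow> 'a \<Rightarrow> real"
  assumes K: "stochastic_matrix K" and rev: "reversible K w"
  shows "(\<Sum>x\<in>UNIV. w x * K x y) = w y"
proof -
  have "(\<Sum>x\<in>UNIV. w x * K x y) = (\<Sum>x\<in>UNIV. w y * K y x)"
    using rev by (simp add: reversible_def)
  also have "\<dots> = w y"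
    using K by (simp add: stochastic_matrix_def flip: sum_distrib_left)
  finally show ?thesis .
qed

lemma stationary_eq_reversible_normalized:
  fixes K :: "'a::finite \<Rightarrow> 'a \<Rightarrow> real"
  assumes K: "stochastic_matrix K"
    and irr: "irreducible_matrix K"
    and w_pos: "\<forall>x. w x > 0"
    and rev: "reversible K w"
    and p: "stationary_distribution K p"
  shows "p x = w x / (\<Sum>z\<in>UNIV. w z)"
proof -
  define f where "f x = p x / w x" for x
  have p_eq: "p x = f x * w x" for x
    using w_pos[rule_format, of x] by (simp add: f_def)
  have "(\<Sum>x\<in>UNIV. K y x * f x) = f y" for y
  proof -
    have "f y * w y = (\<Sum>x\<in>UNIV. f x * (w x * K x y))"
      using p by (simp add: stationary_distribution_def p_eq mult.assoc)
    also have "\<dots> = (\<Sum>x\<in>UNIV. f x * (w y * K y x))"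
      using rev by (simp add: reversible_def)
    also have "\<dots> = w y * (\<Sum>x\<in>UNIV. K y x * f x)"
      by (simp add: sum_distrib_left algebra_simps)
    finally show ?thesis
      using w_pos by (metis mult.commute mult_cancel_left less_irrefl)
  qed
  then obtain M where f_const: "\<And>z. f z = M"
    using irreducible_harmonic_const[OF K irr] by blast
  have "1 = (\<Sum>z\<in>UNIV. p z)"
    using p by (simp add: stationary_distribution_def)
  also have "\<dots> = M * (\<Sum>z\<in>UNIV. w z)"
    by (simp add: p_eq f_const sum_distrib_left)
  finally have "M = 1 / (\<Sum>z\<in>UNIV. w z)"
    by (auto simp: eq_divide_eq)
  then show ?thesis
    by (simp add: p_eq f_const)
qed

lemma reversible_weight_unique_stationary:
  fixes K :: "'a::finite \<Rightarrow> 'a \<Rightarrow> real"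
  assumes K: "stochastic_matrix K"
    and irr: "irreducible_matrix K"
    and w_pos: "\<forall>x. w x > 0"
    and rev: "reversible K w"
  shows "\<exists>c>0. stationary_distribution K (\<lambda>x. c * w x)
            \<and> (\<forall>p. stationary_distribution K p \<longrightarrow> (\<forall>x. p x = c * w x))
            \<and> reversible K (\<lambda>x. c * w x)"
proof -
  define c where "c = 1 / (\<Sum>z\<in>UNIV. w z)"
  have w_sum_pos: "(\<Sum>z\<in>UNIV. w z) > 0"
    using w_pos by (simp add: sum_pos)
  show ?thesis
  proof (intro exI[of _ c] conjI allI impI)
    show c_pos: "c > 0"
      using w_sum_pos by (simp add: c_def)
    show rev_c: "reversible K (\<lambda>x. c * w x)"
      using rev by (simp add: reversible_def mult.assoc)
    show "stationary_distribution K (\<lambda>x. c * w x)"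
      unfolding stationary_distribution_def
      using c_pos w_pos w_sum_pos reversible_imp_stationary[OF K rev_c]
      by (auto simp: c_def less_imp_le simp flip: sum_divide_distrib)
    show "p x = c * w x" if "stationary_distribution K p" for p x
      using stationary_eq_reversible_normalized[OF K irr w_pos rev that] by (simp add: c_def)
  qed
qed

lemma Z_h_pos:
  assumes "\<forall>x. \<pi> x > 0" and "\<forall>u>0. h u > 0" and "N x \<noteq> {}"
  shows "Z_h h \<pi> N x > 0"
  using assms unfolding Z_h_def by (intro sum_pos) auto

lemma Z_h_mult_K_h:
  assumes "Z_h h \<pi> N x > 0"
  shows "Z_h h \<pi> N x * K_h h \<pi> N x y = (if y \<in> N x then h (\<pi> y / \<pi> x) else 0)"
  using assms by (simp add: K_h_def)

lemma stochastic_matrix_K_h: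
  assumes "\<forall>x. \<pi> x > 0" and "\<forall>u>0. h u > 0" and "\<forall>x. N x \<noteq> {}"
  shows "stochastic_matrix (K_h h \<pi> N)"
  unfolding stochastic_matrix_def
proof (intro conjI allI)
  fix x y
  have Z_pos: "Z_h h \<pi> N x > 0"
    using assms Z_h_pos by blast
  then show "K_h h \<pi> N x y \<ge> 0"
    using assms by (simp add: K_h_def less_imp_le)
  have "(\<Sum>y\<in>UNIV. K_h h \<pi> N x y)
      = (\<Sum>y\<in>UNIV. if y \<in> N x then h (\<pi> y / \<pi> x) else 0) / Z_h h \<pi> N x"
    unfolding K_h_def sum_divide_distrib by (intro sum.cong) auto
  also have "\<dots> = 1"
    using Z_pos by (simp add: sum.If_cases Z_h_def)
  finally show "(\<Sum>y\<in>UNIV. K_h h \<pi> N x y) = 1" .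
qed

lemma K_h_pos_iff:
  assumes "\<forall>x. \<pi> x > 0" and "\<forall>u>0. h u > 0" and "N x \<noteq> {}"
  shows "K_h h \<pi> N x y > 0 \<longleftrightarrow> y \<in> N x"
  using assms Z_h_pos[of \<pi> h N x] by (simp add: K_h_def)

lemma reversible_K_h_weighted:
  assumes Z_pos: "\<forall>x. Z_h h \<pi> N x > 0"
    and N_sym: "\<forall>x y. y \<in> N x \<longleftrightarrow> x \<in> N y"
    and balance: "\<forall>x y. w x * h (\<pi> y / \<pi> x) = w y * h (\<pi> x / \<pi> y)"
  shows "reversible (K_h h \<pi> N) (\<lambda>x. w x * Z_h h \<pi> N x)"
  unfolding reversible_def
proof (intro allI)
  fix x y
  have "w x * Z_h h \<pi> N x * K_h h \<pi> N x y = w x * (if y \<in> N x then h (\<pi> y / \<pi> x) else 0)"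
    using Z_pos by (simp add: Z_h_mult_K_h mult.assoc)
  also have "\<dots> = w y * (if x \<in> N y then h (\<pi> x / \<pi> y) else 0)"
    using N_sym balance by simp
  also have "\<dots> = w y * Z_h h \<pi> N y * K_h h \<pi> N y x"
    using Z_pos by (simp add: Z_h_mult_K_h mult.assoc)
  finally show "w x * Z_h h \<pi> N x * K_h h \<pi> N x y = w y * Z_h h \<pi> N y * K_h h \<pi> N y x" .
qed

lemma K_h_weighted_stationary_unique:
  fixes \<pi> :: "'a::finite \<Rightarrow> real" and w :: "'a \<Rightarrow> real"
  assumes pi_pos: "\<forall>x. \<pi> x > 0"
    and N_sym: "\<forall>x y. y \<in> N x \<longleftrightarrow> x \<in> N y"
    and N_nonempty: "\<forall>x. N x \<noteq> {}"
    and irred: "\<forall>K. stochastic_matrix K \<and> (\<forall>x y. K x y > 0 \<longleftrightarrow> y \<in> N x) \<longrightarrow> irreducible_matrix K"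
    and h_pos: "\<forall>u>0. h u > 0"
    and w_pos: "\<forall>x. w x > 0"
    and balance: "\<forall>x y. w x * h (\<pi> y / \<pi> x) = w y * h (\<pi> x / \<pi> y)"
  shows "\<exists>c>0. stationary_distribution (K_h h \<pi> N) (\<lambda>x. c * (w x * Z_h h \<pi> N x))
           \<and> (\<forall>p. stationary_distribution (K_h h \<pi> N) p \<longrightarrow> (\<forall>x. p x = c * (w x * Z_h h \<pi> N x)))
           \<and> reversible (K_h h \<pi> N) (\<lambda>x. c * (w x * Z_h h \<pi> N x))"
proof (rule reversible_weight_unique_stationary)
  show K: "stochastic_matrix (K_h h \<pi> N)"
    using pi_pos h_pos N_nonempty by (rule stochastic_matrix_K_h)
  show "irreducible_matrix (K_h h \<pi> N)"
    using irred[rule_format, OF conjI[OF K]] K_h_pos_iff[OF pi_pos h_pos] N_nonempty by simp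
  have Z_pos: "\<forall>x. Z_h h \<pi> N x > 0"
    using pi_pos h_pos N_nonempty Z_h_pos by blast
  then show "\<forall>x. w x * Z_h h \<pi> N x > 0"
    using w_pos by simp
  show "reversible (K_h h \<pi> N) (\<lambda>x. w x * Z_h h \<pi> N x)"
    using Z_pos N_sym balance by (rule reversible_K_h_weighted)
qed

lemma powr_function_balance:
  fixes s t a :: real
  assumes h: "\<forall>u>0. h u = u powr a" and s: "s > 0" and t: "t > 0"
  shows "s powr (2 * a) * h (t / s) = t powr (2 * a) * h (s / t)"
proof -
  have symmetric: "x powr (2 * a) * h (y / x) = (x * y) powr a" if "x > 0" "y > 0" for x y
  proof -
    have "x powr (2 * a) * h (y / x) = x powr a * x powr a * (y powr a / x powr a)"
      using h that by (simp add: powr_divide powr_add[symmetric])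
    also have "\<dots> = (x * y) powr a"
      using that by (simp add: powr_mult)
    finally show ?thesis .
  qed
  show ?thesis
    unfolding symmetric[OF s t] symmetric[OF t s] by (simp add: mult.commute)
qed

lemma balancing_function_balance:
  fixes h :: "real \<Rightarrow> real"
  assumes h: "\<forall>u>0. h u = u * h (1 / u)" and s: "s > 0" and t: "t > 0"
  shows "s * h (t / s) = t * h (s / t)"
  using h[rule_format, of "t / s"] s t by simp

theorem lemma1:
  fixes \<pi> :: "'a::finite \<Rightarrow> real" and N :: "'a \<Rightarrow> 'a set" and h :: "real \<Rightarrow> real"
  assumes pi_pos: "\<forall>x. \<pi> x > 0"
    and pi_sum: "(\<Sum>x\<in>UNIV. \<pi> x) = 1"
    and N_irrefl: "\<forall>x. x \<notin> N x"
    and N_sym: "\<forall>x y. y \<in> N x \<longleftrightarrow> x \<in> N y"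
    and N_nonempty: "\<forall>x. N x \<noteq> {}"
    and irred: "\<forall>K. stochastic_matrix K \<and> (\<forall>x y. K x y > 0 \<longleftrightarrow> y \<in> N x) \<longrightarrow> irreducible_matrix K"
    and h_pos: "\<forall>u>0. h u > 0"
  shows "(\<forall>a\<ge>0. (\<forall>u>0. h u = u powr a) \<longrightarrow>
            (\<exists>c>0. stationary_distribution (K_h h \<pi> N) (\<lambda>x. c * (\<pi> x powr (2*a) * Z_h h \<pi> N x))
                  \<and> (\<forall>p. stationary_distribution (K_h h \<pi> N) p \<longrightarrow>
                         (\<forall>x. p x = c * (\<pi> x powr (2*a) * Z_h h \<pi> N x)))
                  \<and> reversible (K_h h \<pi> N) (\<lambda>x. c * (\<pi> x powr (2*a) * Z_h h \<pi> N x))))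
       \<and> ((\<forall>u>0. h u = u * h (1/u)) \<longrightarrow>
            (\<exists>c>0. stationary_distribution (K_h h \<pi> N) (\<lambda>x. c * (\<pi> x * Z_h h \<pi> N x))
                  \<and> (\<forall>p. stationary_distribution (K_h h \<pi> N) p \<longrightarrow>
                         (\<forall>x. p x = c * (\<pi> x * Z_h h \<pi> N x)))
                  \<and> reversible (K_h h \<pi> N) (\<lambda>x. c * (\<pi> x * Z_h h \<pi> N x))))"
proof (intro conjI allI impI;
       rule K_h_weighted_stationary_unique[OF pi_pos N_sym N_nonempty irred h_pos])
  fix a :: real
  assume "\<forall>u>0. h u = u powr a"
  then show "\<forall>x y. \<pi> x powr (2*a) * h (\<pi> y / \<pi> x) = \<pi> y powr (2*a) * h (\<pi> x / \<pi> y)"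
    using pi_pos powr_function_balance by blast
next
  assume "\<forall>u>0. h u = u * h (1/u)"
  then show "\<forall>x y. \<pi> x * h (\<pi> y / \<pi> x) = \<pi> y * h (\<pi> x / \<pi> y)"
    using pi_pos balancing_function_balance by blast
qed (use pi_pos in \<open>auto simp: less_imp_neq[symmetric]\<close>)

end
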